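(* Let $\phi$ be a posterior family for a model $\pi$ with data space $Y$ and parameter space $\Theta$, and let $g(\theta,y)=\frac{\pi_{\text{post}}(\theta\mid y)}{\phi(\theta\mid y)}$. Then $\phi$ passes continuous SBC with respect to $g$ if and only if $$\int_Y\int_\Theta \pi_{\text{joint}}(y,\theta)\,\mathbb{I}\big[\pi_{\text{post}}(\theta\mid y)\neq\phi(\theta\mid y)\big]\,\mathrm{d}\theta\,\mathrm{d}y=0.$$
   Context: Model $\pi$: prior density $\pi_{\text{prior}}(\theta)$ on $\Theta$, observation density $\pi_{\text{obs}}(y\mid\theta)$ on $Y$, $\pi_{\text{joint}}(y,\theta)=\pi_{\text{obs}}(y\mid\theta)\pi_{\text{prior}}(\theta)$, $\pi_{\text{marg}}(y)=\int_\Theta\pi_{\text{joint}}(y,\theta)\,\mathrm{d}\theta$, $\pi_{\text{post}}(\theta\mid y)=\pi_{\text{joint}}(y,\theta)/\pi_{\text{marg}}(y)$. A posterior family is $\phi:\Theta\times Y\to\mathbb{R}^+$ with $\int_\Theta\phi(\theta\mid y)\,\mathrm{d}\theta=1$ for all $y$; a test quantity is a measurable real function on $\Theta\times Y$. For a test quantity $f$: $C_{\phi,f}(s\mid y)=\int_\Theta\mathbb{I}[f(\theta,y)\le s]\phi(\theta\mid y)\,\mathrm{d}\theta$, $D_{\phi,f}(s\mid y)=\int_\Theta\mathbb{I}[f(\theta,y)=s]\phi(\theta\mid y)\,\mathrm{d}\theta$; with $U\sim\mathrm{uniform}[0,1]$, $r_{\phi,f}(x\mid\tilde\theta,y)=\Pr\big(C_{\phi,f}(f(\tilde\theta,y)\mid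 y)-U\,D_{\phi,f}(f(\tilde\theta,y)\mid y)\le x\big)$, $q_{\phi,f}(x\mid y)=\int_\Theta\pi_{\text{post}}(\tilde\theta\mid y)r_{\phi,f}(x\mid\tilde\theta,y)\,\mathrm{d}\tilde\theta$. $\phi$ passes continuous SBC w.r.t. $f$ if $\int_Yq_{\phi,f}(x\mid y)\pi_{\text{marg}}(y)\,\mathrm{d}y=x$ for all $x\in[0,1]$. *)

theory Defs
  imports "HOL-Analysis.Analysis"
begin

text \<open>Argument conventions: obs y th = pi_obs(y | th), phi th y = phi(th | y),
  post th y = pi_post(th | y), joint y th = pi_joint(y, th).\<close>

definition is_model :: "'t measure \<Rightarrow> 'y measure \<Rightarrow> ('t \<Rightarrow> real) \<Rightarrow> ('y \<Rightarrow> 't \<Rightarrow> real) \<Rightarrow> bool" where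
  "is_model MT MY prior obs \<longleftrightarrow>
     sigma_finite_measure MT \<and> sigma_finite_measure MY \<and>
     prior \<in> borel_measurable MT \<and>
     (\<lambda>(y, th). obs y th) \<in> borel_measurable (MY \<Otimes>\<^sub>M MT) \<and>
     (\<forall>th\<in>space MT. prior th \<ge> 0) \<and>
     (\<forall>y\<in>space MY. \<forall>th\<in>space MT. obs y th \<ge> 0) \<and>
     integrable MT prior \<and> (\<integral>th. prior th \<partial>MT) = 1 \<and>
     (\<forall>th\<in>space MT. integrable MY (\<lambda>y. obs y th) \<and> (\<integral>y. obs y th \<partial>MY) = 1)"

definition joint :: "('t \<Rightarrow> real) \<Rightarrow> ('y \<Rightarrow> 't \<Rightarrow> real) \<Rightarrow> 'y \<Rightarrow> 't \<Rightarrow> real" where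
  "joint prior obs y th = obs y th * prior th"

definition marg :: "'t measure \<Rightarrow> ('t \<Rightarrow> real) \<Rightarrow> ('y \<Rightarrow> 't \<Rightarrow> real) \<Rightarrow> 'y \<Rightarrow> real" where
  "marg MT prior obs y = (\<integral>th. joint prior obs y th \<partial>MT)"

definition post :: "'t measure \<Rightarrow> ('t \<Rightarrow> real) \<Rightarrow> ('y \<Rightarrow> 't \<Rightarrow> real) \<Rightarrow> 't \<Rightarrow> 'y \<Rightarrow> real" where
  "post MT prior obs th y = joint prior obs y th / marg MT prior obs y"

text \<open>Posterior family: phi : Theta x Y -> R^+ (read as strictly positive reals),
  measurable, normalised for every y.\<close>
definition posterior_family :: "'t measure \<Rightarrow> 'y measure \<Rightarrow> ('t \<Rightarrow> 'y \<Rightarrow> real) \<Rightarrow> bool" where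
  "posterior_family MT MY phi \<longleftrightarrow>
     (\<lambda>(th, y). phi th y) \<in> borel_measurable (MT \<Otimes>\<^sub>M MY) \<and>
     (\<forall>th\<in>space MT. \<forall>y\<in>space MY. phi th y > 0) \<and>
     (\<forall>y\<in>space MY. integrable MT (\<lambda>th. phi th y) \<and> (\<integral>th. phi th y \<partial>MT) = 1)"

definition sbc_C :: "'t measure \<Rightarrow> ('t \<Rightarrow> 'y \<Rightarrow> real) \<Rightarrow> ('t \<Rightarrow> 'y \<Rightarrow> real) \<Rightarrow> real \<Rightarrow> 'y \<Rightarrow> real" where
  "sbc_C MT phi f s y = (\<integral>th. (if f th y \<le> s then 1 else 0) * phi th y \<partial>MT)"

definition sbc_D :: "'t measure \<Rightarrow> ('t \<Rightarrow> 'y \<Rightarrow> real) \<Rightarrow> ('t \<Rightarrow> 'y \<Rightarrow> real) \<Rightarrow> real \<Rightarrow> 'y \<Rightarrow> real" where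
  "sbc_D MT phi f s y = (\<integral>th. (if f th y = s then 1 else 0) * phi th y \<partial>MT)"

definition sbc_r :: "'t measure \<Rightarrow> ('t \<Rightarrow> 'y \<Rightarrow> real) \<Rightarrow> ('t \<Rightarrow> 'y \<Rightarrow> real) \<Rightarrow> real \<Rightarrow> 't \<Rightarrow> 'y \<Rightarrow> real" where
  "sbc_r MT phi f x tht y =
     measure lborel {u \<in> {0..1::real}.
        sbc_C MT phi f (f tht y) y - u * sbc_D MT phi f (f tht y) y \<le> x}"

definition sbc_q :: "'t measure \<Rightarrow> ('t \<Rightarrow> real) \<Rightarrow> ('y \<Rightarrow> 't \<Rightarrow> real) \<Rightarrow> ('t \<Rightarrow> 'y \<Rightarrow> real) \<Rightarrow> ('t \<Rightarrow> 'y \<Rightarrow> real) \<Rightarrow> real \<Rightarrow> 'y \<Rightarrow> real" where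
  "sbc_q MT prior obs phi f x y = (\<integral>tht. post MT prior obs tht y * sbc_r MT phi f x tht y \<partial>MT)"

definition passes_continuous_SBC :: "'t measure \<Rightarrow> 'y measure \<Rightarrow> ('t \<Rightarrow> real) \<Rightarrow> ('y \<Rightarrow> 't \<Rightarrow> real) \<Rightarrow> ('t \<Rightarrow> 'y \<Rightarrow> real) \<Rightarrow> ('t \<Rightarrow> 'y \<Rightarrow> real) \<Rightarrow> bool" where
  "passes_continuous_SBC MT MY prior obs phi f \<longleftrightarrow>
     (\<forall>x\<in>{0..1::real}. (\<integral>y. sbc_q MT prior obs phi f x y * marg MT prior obs y \<partial>MY) = x)"

end

theory Submission
  imports Defs "HOL-Probability.Distribution_Functions"
begin

(* Fix y with positive marginal density and write p = pi_post(. | y), phi = phi(. | y) and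
   g = p / phi.  The SBC rank of g is the randomized probability integral transform of g under
   phi, so r(x | theta) is a threshold test in g: it is 1 where g < T and 0 where g > T, for an
   x-quantile T of the law of g under phi, and it integrates to x against phi.  Since p - T phi
   has the sign of g - T, the product (p - T phi) (x - r) is nonnegative; hence
   q(x | y) = int p r <= int phi r = x, with equality for 0 < x < 1 only if p = T phi almost
   everywhere, i.e. p = phi.  Integrating against the marginal, SBC at x = 1/2 forces p = phi for
   almost every y; conversely, p = phi makes g = 1 almost everywhere and then r(x | theta) = x. *)

(* Pr(F s - U * mu {s} <= x) for U uniform on [0, 1], F the cdf of mu: the conditional cdf of the
   randomized probability integral transform given the value s.  sbc_r is this function for the
   law of the test quantity under phi(. | y). *)
definition randomized_pit_cdf :: "real measure \<Rightarrow> real \<Rightarrow> real \<Rightarrow> real" where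
  "randomized_pit_cdf \<mu> x s = measure lborel {u \<in> {0..1}. cdf \<mu> s - u * measure \<mu> {s} \<le> x}"

lemma randomized_pit_cdf_nonneg: "0 \<le> randomized_pit_cdf \<mu> x s"
  by (simp add: randomized_pit_cdf_def)

lemma randomized_pit_cdf_le_1: "randomized_pit_cdf \<mu> x s \<le> 1"
proof -
  have "measure lborel {u \<in> {0..1::real}. cdf \<mu> s - u * measure \<mu> {s} \<le> x} \<le> measure lborel {0..1::real}"
    by (intro measure_mono_fmeasurable) (auto simp: fmeasurable_def)
  then show ?thesis by (simp add: randomized_pit_cdf_def)
qed

context real_distribution
begin

lemma cdf_eq_measure_lessThan_plus_atom: "cdf M s = measure M {..<s} + measure M {s}"
proof -
  have "measure M ({..<s} \<union> {s}) = measure M {..<s} + measure M {s}"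
    by (rule finite_measure_Union) auto
  moreover have "{..<s} \<union> {s} = {..s}" by auto
  ultimately show ?thesis by (simp add: cdf_def2)
qed

lemma measure_lessThan_le_if_cdf_le:
  assumes "\<And>s. s < T \<Longrightarrow> cdf M s \<le> x"
  shows "measure M {..<T} \<le> x"
proof (rule tendsto_upperbound)
  show "(cdf M \<longlongrightarrow> measure M {..<T}) (at_left T)"
    by (rule cdf_at_left)
  show "\<forall>\<^sub>F s in at_left T. cdf M s \<le> x"
    by (rule eventually_at_leftI[of "T - 1"]) (auto intro: assms)
qed simp

lemma le_cdf_if_le_measure_lessThan:
  assumes "\<And>s. T < s \<Longrightarrow> x \<le> measure M {..<s}"
  shows "x \<le> cdf M T"
proof (rule tendsto_lowerbound)
  show "(cdf M \<longlongrightarrow> cdf M T) (at_right T)"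
    using cdf_is_right_cont by (simp add: continuous_within)
  show "\<forall>\<^sub>F s in at_right T. x \<le> cdf M s"
    using eventually_at_right_less
  proof eventually_elim
    case (elim s)
    then show ?case
      using assms[of s] cdf_eq_measure_lessThan_plus_atom[of s] measure_nonneg[of M "{s}"] by linarith
  qed
qed simp

lemma quantile:
  assumes "0 < x" "x < 1"
  obtains T where "\<And>s. s < T \<Longrightarrow> cdf M s \<le> x" "\<And>s. T < s \<Longrightarrow> x < measure M {..<s}"
proof -
  define T where "T = Inf {s. x < cdf M s}"
  have nonempty: "{s. x < cdf M s} \<noteq> {}"
    using eventually_happens'[OF _ order_tendstoD(1)[OF cdf_lim_at_top_prob assms(2)]] by auto
  obtain b where "\<And>s. s \<le> b \<Longrightarrow> cdf M s < x"
    using order_tendstoD(2)[OF cdf_lim_at_bot assms(1)] by (auto simp: eventually_at_bot_linorder)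
  then have bdd: "bdd_below {s. x < cdf M s}"
    by (intro bdd_belowI[of _ b]) (meson mem_Collect_eq not_le less_imp_le order.asym)
  have "cdf M s \<le> x" if "s < T" for s
    using that cInf_lower[OF _ bdd, of s] unfolding T_def by (meson mem_Collect_eq not_le order.trans)
  moreover have "x < measure M {..<s}" if "T < s" for s
  proof -
    obtain s' where "x < cdf M s'" "s' < s"
      using \<open>T < s\<close> cInf_less_iff[OF nonempty bdd] unfolding T_def by auto
    moreover have "cdf M s' \<le> measure M {..<s}"
      unfolding cdf_def2 using \<open>s' < s\<close> by (intro finite_measure_mono) auto
    ultimately show ?thesis by simp
  qed
  ultimately show ?thesis
    by (rule that)
qed

lemma randomized_pit_cdf_eq_1: "cdf M s \<le> x \<Longrightarrow> randomized_pit_cdf M x s = 1"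
proof -
  assume "cdf M s \<le> x"
  then have "{u \<in> {0..1}. cdf M s - u * measure M {s} \<le> x} = {0..1}"
    using measure_nonneg[of M "{s}"] by (auto intro: order_trans[rotated])
  then show ?thesis
    by (simp add: randomized_pit_cdf_def)
qed

lemma randomized_pit_cdf_eq_0: "x < measure M {..<s} \<Longrightarrow> randomized_pit_cdf M x s = 0"
proof -
  assume "x < measure M {..<s}"
  then have "x < cdf M s - u * measure M {s}" if "u \<le> 1" for u
    using cdf_eq_measure_lessThan_plus_atom[of s] mult_right_mono[OF that measure_nonneg[of M "{s}"]]
    by simp
  then have "{u \<in> {0..1}. cdf M s - u * measure M {s} \<le> x} = {}"
    by (auto simp: not_le[symmetric])
  then show ?thesis
    unfolding randomized_pit_cdf_def by (simp only: measure_empty)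
qed

lemma measure_lessThan_plus_randomized_pit_cdf_mult_atom:
  assumes "measure M {..<s} \<le> x" "x \<le> cdf M s"
  shows "measure M {..<s} + randomized_pit_cdf M x s * measure M {s} = x"
proof (cases "measure M {s} = 0")
  case True
  then show ?thesis
    using assms cdf_eq_measure_lessThan_plus_atom[of s] by simp
next
  case False
  define a where "a = (cdf M s - x) / measure M {s}"
  have atom_pos: "0 < measure M {s}"
    using False measure_nonneg[of M "{s}"] by linarith
  have a_bounds: "0 \<le> a" "a \<le> 1"
    using atom_pos assms cdf_eq_measure_lessThan_plus_atom[of s]
    by (simp_all add: a_def pos_divide_le_eq)
  have a_le_iff: "a \<le> u \<longleftrightarrow> cdf M s - x \<le> u * measure M {s}" for u
    unfolding a_def using atom_pos by (rule pos_divide_le_eq)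
  have rank_iff: "cdf M s - u * measure M {s} \<le> x \<longleftrightarrow> a \<le> u" for u
    using a_le_iff[of u] by linarith
  have "{u \<in> {0..1}. cdf M s - u * measure M {s} \<le> x} = {a..1}"
    unfolding rank_iff using a_bounds by auto
  then have rank_eq: "randomized_pit_cdf M x s = 1 - a"
    using a_bounds by (simp add: randomized_pit_cdf_def)
  have "a * measure M {s} = cdf M s - x"
    using atom_pos by (simp add: a_def)
  then show ?thesis
    unfolding rank_eq using cdf_eq_measure_lessThan_plus_atom[of s] by (simp add: algebra_simps)
qed

lemma randomized_pit_cdf_threshold:
  assumes "0 < x" "x < 1"
  obtains T c where "randomized_pit_cdf M x = (\<lambda>s. if s < T then 1 else if s = T then c else 0)"
    and "measure M {..<T} + c * measure M {T} = x"
proof -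
  obtain T where below: "\<And>s. s < T \<Longrightarrow> cdf M s \<le> x" and above: "\<And>s. T < s \<Longrightarrow> x < measure M {..<s}"
    using quantile[OF assms] by blast
  have rank: "randomized_pit_cdf M x = (\<lambda>s. if s < T then 1 else if s = T then randomized_pit_cdf M x T else 0)"
  proof
    fix s
    show "randomized_pit_cdf M x s = (if s < T then 1 else if s = T then randomized_pit_cdf M x T else 0)"
      by (cases s T rule: linorder_cases) (auto intro: randomized_pit_cdf_eq_1 randomized_pit_cdf_eq_0 below above)
  qed
  have "measure M {..<T} \<le> x"
    by (rule measure_lessThan_le_if_cdf_le) (rule below)
  moreover have "x \<le> cdf M T"
    by (rule le_cdf_if_le_measure_lessThan) (simp add: above less_imp_le)
  ultimately have "measure M {..<T} + randomized_pit_cdf M x T * measure M {T} = x"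
    by (rule measure_lessThan_plus_randomized_pit_cdf_mult_atom)
  with rank show ?thesis
    by (rule that)
qed

lemma integral_randomized_pit_cdf:
  assumes "0 < x" "x < 1"
  shows "(\<integral>s. randomized_pit_cdf M x s \<partial>M) = x"
proof -
  obtain T c where rank: "randomized_pit_cdf M x = (\<lambda>s. if s < T then 1 else if s = T then c else 0)"
    and mass: "measure M {..<T} + c * measure M {T} = x"
    using randomized_pit_cdf_threshold[OF assms] .
  have "randomized_pit_cdf M x = (\<lambda>s. indicator {..<T} s + c * indicator {T} s)"
    unfolding rank by (auto simp: indicator_def)
  moreover have "(\<integral>s. indicator {..<T} s + c * indicator {T} s \<partial>M) = measure M {..<T} + c * measure M {T}"
    by (subst Bochner_Integration.integral_add) (auto intro!: integrable_real_indicator simp: less_top[symmetric])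
  ultimately show ?thesis
    using mass by simp
qed

lemma borel_measurable_randomized_pit_cdf: "randomized_pit_cdf M x \<in> borel_measurable borel"
proof -
  have [measurable]: "cdf M \<in> borel_measurable borel" "(\<lambda>s. measure M {..<s}) \<in> borel_measurable borel"
    by (auto intro!: borel_measurable_mono finite_measure_mono simp: mono_def cdf_def2)
  have "(\<lambda>s. measure M {s}) = (\<lambda>s. cdf M s - measure M {..<s})"
    using cdf_eq_measure_lessThan_plus_atom by auto
  then have [measurable]: "(\<lambda>s. measure M {s}) \<in> borel_measurable borel"
    by simp
  show ?thesis
    unfolding randomized_pit_cdf_def by measurable
qed

end

(* H is a randomized test of size x under phi that rejects where the likelihood ratio p / phi is
   below T, as in the Neyman-Pearson lemma. *)
locale threshold_test =
  fixes M :: "'a measure" and p \<phi> H :: "'a \<Rightarrow> real" and T x :: real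
  assumes integrable_p: "integrable M p" and integrable_\<phi>: "integrable M \<phi>"
    and integral_p: "(\<integral>t. p t \<partial>M) = 1" and integral_\<phi>: "(\<integral>t. \<phi> t \<partial>M) = 1"
    and measurable_H [measurable]: "H \<in> borel_measurable M"
    and H_nonneg: "\<And>t. t \<in> space M \<Longrightarrow> 0 \<le> H t"
    and H_le_1: "\<And>t. t \<in> space M \<Longrightarrow> H t \<le> 1"
    and H_below: "\<And>t. t \<in> space M \<Longrightarrow> p t < T * \<phi> t \<Longrightarrow> H t = 1"
    and H_above: "\<And>t. t \<in> space M \<Longrightarrow> T * \<phi> t < p t \<Longrightarrow> H t = 0"
    and size: "(\<integral>t. \<phi> t * H t \<partial>M) = x"
    and size_nonneg: "0 \<le> x" and size_le_1: "x \<le> 1"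
begin

lemma integrable_mult_H: "integrable M f \<Longrightarrow> integrable M (\<lambda>t. f t * H t)"
  for f :: "'a \<Rightarrow> real"
  by (rule Bochner_Integration.integrable_bound[of _ f])
    (auto intro!: AE_I2 mult_left_le simp: abs_mult H_nonneg H_le_1)

lemma defect_eq:
  "(\<lambda>t. (p t - T * \<phi> t) * (x - H t)) = (\<lambda>t. x * p t - (T * x) * \<phi> t - p t * H t + T * (\<phi> t * H t))"
  by (auto simp: algebra_simps)

lemma integrable_defect: "integrable M (\<lambda>t. (p t - T * \<phi> t) * (x - H t))"
  unfolding defect_eq using integrable_mult_H integrable_p integrable_\<phi> by simp

lemma integral_defect: "(\<integral>t. (p t - T * \<phi> t) * (x - H t) \<partial>M) = x - (\<integral>t. p t * H t \<partial>M)"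
  unfolding defect_eq using integrable_mult_H integrable_p integrable_\<phi> integral_p integral_\<phi> size
  by simp

lemma defect_nonneg: "t \<in> space M \<Longrightarrow> 0 \<le> (p t - T * \<phi> t) * (x - H t)"
  using H_below[of t] H_above[of t] size_nonneg size_le_1
  by (cases "p t" "T * \<phi> t" rule: linorder_cases) (auto simp: zero_le_mult_iff)

theorem integral_mult_H_le: "(\<integral>t. p t * H t \<partial>M) \<le> x"
proof -
  have "0 \<le> (\<integral>t. (p t - T * \<phi> t) * (x - H t) \<partial>M)"
    by (rule Bochner_Integration.integral_nonneg) (rule defect_nonneg)
  then show ?thesis
    by (simp add: integral_defect)
qed

theorem AE_eq_if_integral_mult_H_eq:
  assumes "0 < x" "x < 1" and "(\<integral>t. p t * H t \<partial>M) = x"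
  shows "AE t in M. p t = \<phi> t"
proof -
  have "AE t in M. (p t - T * \<phi> t) * (x - H t) = 0"
    using integral_nonneg_eq_0_iff_AE[OF integrable_defect] integral_defect assms(3) defect_nonneg
    by (auto intro!: AE_I2)
  then have AE_threshold: "AE t in M. p t = T * \<phi> t"
  proof (rule AE_mp[OF _ AE_I2], intro impI)
    fix t assume "t \<in> space M" and "(p t - T * \<phi> t) * (x - H t) = 0"
    then show "p t = T * \<phi> t"
      using H_below[of t] H_above[of t] assms(1,2)
      by (cases "p t" "T * \<phi> t" rule: linorder_cases) auto
  qed
  then have "(\<integral>t. p t \<partial>M) = T * (\<integral>t. \<phi> t \<partial>M)"
    using integrable_p integrable_\<phi> by (simp add: integral_cong_AE[OF _ _ AE_threshold])
  then have "T = 1"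
    using integral_p integral_\<phi> by simp
  then show ?thesis
    using AE_threshold by simp
qed

end

lemma integral_distr_density:
  fixes \<phi> g :: "'a \<Rightarrow> real" and h :: "real \<Rightarrow> real"
  assumes [measurable]: "\<phi> \<in> borel_measurable M" "g \<in> borel_measurable M" "h \<in> borel_measurable borel"
    and "AE t in M. 0 \<le> \<phi> t"
  shows "(\<integral>s. h s \<partial>distr (density M \<phi>) borel g) = (\<integral>t. \<phi> t * h (g t) \<partial>M)"
  using assms(4) by (simp add: integral_distr integral_density)

lemma measure_distr_density:
  fixes \<phi> g :: "'a \<Rightarrow> real"
  assumes "\<phi> \<in> borel_measurable M" "g \<in> borel_measurable M" "AE t in M. 0 \<le> \<phi> t" "A \<in> sets borel"
  shows "measure (distr (density M \<phi>) borel g) A = (\<integral>t. \<phi> t * indicator A (g t) \<partial>M)"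
  using integral_distr_density[of \<phi> M g "indicator A"] assms by simp

locale positive_density_pair =
  fixes M :: "'a measure" and p \<phi> :: "'a \<Rightarrow> real"
  assumes measurable_p [measurable]: "p \<in> borel_measurable M"
    and measurable_\<phi> [measurable]: "\<phi> \<in> borel_measurable M"
    and p_nonneg: "\<And>t. t \<in> space M \<Longrightarrow> 0 \<le> p t"
    and \<phi>_pos: "\<And>t. t \<in> space M \<Longrightarrow> 0 < \<phi> t"
    and integrable_p: "integrable M p" and integrable_\<phi>: "integrable M \<phi>"
    and integral_p: "(\<integral>t. p t \<partial>M) = 1" and integral_\<phi>: "(\<integral>t. \<phi> t \<partial>M) = 1"
begin

definition ratio_law :: "real measure" where
  "ratio_law = distr (density M \<phi>) borel (\<lambda>t. p t / \<phi> t)"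

lemma AE_\<phi>_nonneg: "AE t in M. 0 \<le> \<phi> t"
  using \<phi>_pos by (auto intro!: AE_I2 less_imp_le)

lemma real_distribution_ratio_law: "real_distribution ratio_law"
proof -
  have "emeasure (density M \<phi>) (space M) = ennreal (\<integral>t. \<phi> t \<partial>M)"
    using integrable_\<phi> AE_\<phi>_nonneg
    by (simp add: emeasure_density nn_integral_eq_integral[symmetric] indicator_inter_arith[symmetric])
  then have "prob_space (density M \<phi>)"
    using integral_\<phi> by (intro prob_spaceI) simp
  then show ?thesis
    unfolding ratio_law_def real_distribution_def real_distribution_axioms_def
    by (auto intro!: prob_space.prob_space_distr)
qed

interpretation ratio_law: real_distribution ratio_law
  by (rule real_distribution_ratio_law)

lemma integral_\<phi>_mult_rank:
  "(\<integral>t. \<phi> t * randomized_pit_cdf ratio_law x (p t / \<phi> t) \<partial>M) = (\<integral>s. randomized_pit_cdf ratio_law x s \<partial>ratio_law)"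
  using integral_distr_density[OF measurable_\<phi> _ ratio_law.borel_measurable_randomized_pit_cdf AE_\<phi>_nonneg]
  by (simp add: ratio_law_def)

lemma threshold_test_rank:
  assumes "0 < x" "x < 1"
  obtains T where "threshold_test M p \<phi> (\<lambda>t. randomized_pit_cdf ratio_law x (p t / \<phi> t)) T x"
proof -
  obtain T c where rank: "randomized_pit_cdf ratio_law x = (\<lambda>s. if s < T then 1 else if s = T then c else 0)"
    using ratio_law.randomized_pit_cdf_threshold[OF assms] by blast
  have "threshold_test M p \<phi> (\<lambda>t. randomized_pit_cdf ratio_law x (p t / \<phi> t)) T x"
  proof
    fix t assume "t \<in> space M"
    then have "p t < T * \<phi> t \<longleftrightarrow> p t / \<phi> t < T" "T * \<phi> t < p t \<longleftrightarrow> T < p t / \<phi> t"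
      using \<phi>_pos[of t] by (simp_all add: divide_less_eq less_divide_eq)
    then show "p t < T * \<phi> t \<Longrightarrow> randomized_pit_cdf ratio_law x (p t / \<phi> t) = 1"
      "T * \<phi> t < p t \<Longrightarrow> randomized_pit_cdf ratio_law x (p t / \<phi> t) = 0"
      unfolding rank by auto
  next
    show "(\<integral>t. \<phi> t * randomized_pit_cdf ratio_law x (p t / \<phi> t) \<partial>M) = x"
      using integral_\<phi>_mult_rank ratio_law.integral_randomized_pit_cdf[OF assms] by simp
  qed (use assms integrable_p integrable_\<phi> integral_p integral_\<phi> randomized_pit_cdf_nonneg
      randomized_pit_cdf_le_1 ratio_law.borel_measurable_randomized_pit_cdf in auto)
  then show ?thesis ..
qed

lemma integral_rank_nonneg: "0 \<le> (\<integral>t. p t * randomized_pit_cdf ratio_law x (p t / \<phi> t) \<partial>M)"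
  by (intro Bochner_Integration.integral_nonneg mult_nonneg_nonneg p_nonneg randomized_pit_cdf_nonneg)

lemma integral_rank_le:
  assumes "0 < x" "x < 1"
  shows "(\<integral>t. p t * randomized_pit_cdf ratio_law x (p t / \<phi> t) \<partial>M) \<le> x"
  using threshold_test_rank[OF assms] threshold_test.integral_mult_H_le by metis

lemma AE_eq_if_integral_rank_eq:
  assumes "0 < x" "x < 1" "(\<integral>t. p t * randomized_pit_cdf ratio_law x (p t / \<phi> t) \<partial>M) = x"
  shows "AE t in M. p t = \<phi> t"
  using threshold_test_rank[OF assms(1,2)] threshold_test.AE_eq_if_integral_mult_H_eq assms by metis

lemma integral_rank_eq_if_AE_eq:
  assumes AE_eq: "AE t in M. p t = \<phi> t" and x: "0 \<le> x" "x \<le> 1"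
  shows "(\<integral>t. p t * randomized_pit_cdf ratio_law x (p t / \<phi> t) \<partial>M) = x"
proof -
  have AE_ratio: "AE t in M. p t / \<phi> t = 1"
    using AE_eq by (rule AE_mp) (auto intro!: AE_I2 dest: \<phi>_pos)
  have "measure ratio_law {1} = (\<integral>t. \<phi> t * indicator {1} (p t / \<phi> t) \<partial>M)"
    unfolding ratio_law_def by (rule measure_distr_density) (auto intro: AE_\<phi>_nonneg)
  also have "\<dots> = (\<integral>t. \<phi> t \<partial>M)"
    using AE_ratio by (intro integral_cong_AE) auto
  finally have atom: "measure ratio_law {1} = 1"
    using integral_\<phi> by simp
  moreover have "measure ratio_law {1} \<le> cdf ratio_law 1"
    unfolding cdf_def2 by (intro ratio_law.finite_measure_mono) auto
  ultimately have "cdf ratio_law 1 = 1"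
    using ratio_law.cdf_bounded_prob[of 1] by simp
  then have "{u \<in> {0..1}. cdf ratio_law 1 - u * measure ratio_law {1} \<le> x} = {1 - x..1}"
    using atom x by auto
  then have rank_1: "randomized_pit_cdf ratio_law x 1 = x"
    using x by (simp add: randomized_pit_cdf_def)
  have "(\<integral>t. p t * randomized_pit_cdf ratio_law x (p t / \<phi> t) \<partial>M) = (\<integral>t. p t * x \<partial>M)"
    using AE_ratio rank_1 ratio_law.borel_measurable_randomized_pit_cdf
    by (intro integral_cong_AE) auto
  then show ?thesis
    using integral_p by simp
qed

lemma AE_eq_or_zero_iff_AE_eq: "(AE t in M. p t = \<phi> t \<or> p t = 0) \<longleftrightarrow> (AE t in M. p t = \<phi> t)"
proof
  assume "AE t in M. p t = \<phi> t \<or> p t = 0"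
  then have "AE t in M. 0 \<le> \<phi> t - p t"
    using AE_\<phi>_nonneg by eventually_elim auto
  moreover have "(\<integral>t. \<phi> t - p t \<partial>M) = 0"
    using integrable_p integrable_\<phi> integral_p integral_\<phi> by simp
  ultimately have "AE t in M. \<phi> t - p t = 0"
    using integral_nonneg_eq_0_iff_AE[of M "\<lambda>t. \<phi> t - p t"] integrable_p integrable_\<phi> by simp
  then show "AE t in M. p t = \<phi> t"
    by eventually_elim simp
qed (auto elim: AE_mp)

end

lemma sbc_r_eq_randomized_pit_cdf:
  assumes "(\<lambda>th. phi th y) \<in> borel_measurable MT" "(\<lambda>th. f th y) \<in> borel_measurable MT"
    and "AE th in MT. 0 \<le> phi th y"
  shows "sbc_r MT phi f x tht y
    = randomized_pit_cdf (distr (density MT (\<lambda>th. phi th y)) borel (\<lambda>th. f th y)) x (f tht y)"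
proof -
  let ?\<nu> = "distr (density MT (\<lambda>th. phi th y)) borel (\<lambda>th. f th y)"
  have "sbc_C MT phi f s y = cdf ?\<nu> s" for s
    unfolding sbc_C_def cdf_def2 using assms
    by (subst measure_distr_density) (auto intro!: Bochner_Integration.integral_cong)
  moreover have "sbc_D MT phi f s y = measure ?\<nu> {s}" for s
    unfolding sbc_D_def using assms
    by (subst measure_distr_density) (auto intro!: Bochner_Integration.integral_cong)
  ultimately show ?thesis
    by (simp add: sbc_r_def randomized_pit_cdf_def)
qed

locale sbc_model =
  fixes MT :: "'t measure" and MY :: "'y measure"
    and prior :: "'t \<Rightarrow> real" and obs :: "'y \<Rightarrow> 't \<Rightarrow> real"
    and phi :: "'t \<Rightarrow> 'y \<Rightarrow> real"
  assumes model: "is_model MT MY prior obs"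
    and family: "posterior_family MT MY phi"
begin

abbreviation ratio :: "'t \<Rightarrow> 'y \<Rightarrow> real" where
  "ratio \<equiv> \<lambda>th y. post MT prior obs th y / phi th y"

sublocale MT: sigma_finite_measure MT
  using model by (simp add: is_model_def)

sublocale MY: sigma_finite_measure MY
  using model by (simp add: is_model_def)

sublocale MYT: pair_sigma_finite MY MT ..

lemma measurable_prior [measurable]: "prior \<in> borel_measurable MT"
  and measurable_obs [measurable]: "(\<lambda>(y, th). obs y th) \<in> borel_measurable (MY \<Otimes>\<^sub>M MT)"
  and measurable_phi [measurable]: "(\<lambda>(th, y). phi th y) \<in> borel_measurable (MT \<Otimes>\<^sub>M MY)"
  using model family by (simp_all add: is_model_def posterior_family_def)

lemma measurable_joint [measurable]: "(\<lambda>(y, th). joint prior obs y th) \<in> borel_measurable (MY \<Otimes>\<^sub>M MT)"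
  unfolding joint_def by measurable

lemma measurable_marg [measurable]: "marg MT prior obs \<in> borel_measurable MY"
  unfolding marg_def joint_def by measurable

lemma measurable_post [measurable]: "(\<lambda>(th, y). post MT prior obs th y) \<in> borel_measurable (MT \<Otimes>\<^sub>M MY)"
  unfolding post_def joint_def by measurable

lemma measurable_sbc_q_ratio [measurable]: "sbc_q MT prior obs phi ratio x \<in> borel_measurable MY"
  unfolding sbc_q_def sbc_r_def sbc_C_def sbc_D_def by measurable

lemma joint_nonneg: "y \<in> space MY \<Longrightarrow> th \<in> space MT \<Longrightarrow> 0 \<le> joint prior obs y th"
  using model by (simp add: is_model_def joint_def)

lemma marg_nonneg: "y \<in> space MY \<Longrightarrow> 0 \<le> marg MT prior obs y"
  unfolding marg_def by (intro Bochner_Integration.integral_nonneg joint_nonneg)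

(* A non-integrable function has Bochner integral 0. *)
lemma integrable_joint_if_marg_pos: "0 < marg MT prior obs y \<Longrightarrow> integrable MT (joint prior obs y)"
  unfolding marg_def using not_integrable_integral_eq by force

lemma AE_joint_eq_0_if_marg_eq_0:
  assumes "y \<in> space MY" "integrable MT (joint prior obs y)" "marg MT prior obs y = 0"
  shows "AE th in MT. joint prior obs y th = 0"
  using integral_nonneg_eq_0_iff_AE[OF assms(2)] joint_nonneg[OF assms(1)] assms(3)
  by (auto intro!: AE_I2 simp: marg_def)

lemma nn_integral_obs: "th \<in> space MT \<Longrightarrow> (\<integral>\<^sup>+y. obs y th \<partial>MY) = 1"
  using model by (subst nn_integral_eq_integral) (auto intro!: AE_I2 simp: is_model_def)

lemma nn_integral_joint: "(\<integral>\<^sup>+z. case_prod (joint prior obs) z \<partial>(MY \<Otimes>\<^sub>M MT)) = 1"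
proof -
  have "(\<integral>\<^sup>+z. case_prod (joint prior obs) z \<partial>(MY \<Otimes>\<^sub>M MT))
      = (\<integral>\<^sup>+th. (\<integral>\<^sup>+y. ennreal (obs y th) * ennreal (prior th) \<partial>MY) \<partial>MT)"
    using model by (subst MYT.nn_integral_snd[symmetric])
      (auto intro!: nn_integral_cong simp: is_model_def joint_def ennreal_mult)
  also have "\<dots> = (\<integral>\<^sup>+th. prior th \<partial>MT)"
    by (intro nn_integral_cong) (simp add: nn_integral_multc nn_integral_obs)
  also have "\<dots> = 1"
    using model by (subst nn_integral_eq_integral) (auto intro!: AE_I2 simp: is_model_def)
  finally show ?thesis .
qed

lemma integrable_joint: "integrable (MY \<Otimes>\<^sub>M MT) (case_prod (joint prior obs))"
  using nn_integral_joint joint_nonneg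
  by (intro integrableI_nonneg) (auto intro!: AE_I2 simp: space_pair_measure)

lemma AE_integrable_joint: "AE y in MY. integrable MT (joint prior obs y)"
  using MYT.AE_integrable_fst[OF integrable_joint] by simp

lemma integrable_marg: "integrable MY (marg MT prior obs)"
  unfolding marg_def[abs_def] by (rule MYT.integrable_fst[OF integrable_joint])

lemma integral_marg: "(\<integral>y. marg MT prior obs y \<partial>MY) = 1"
proof -
  have "(\<integral>y. marg MT prior obs y \<partial>MY) = (\<integral>z. case_prod (joint prior obs) z \<partial>(MY \<Otimes>\<^sub>M MT))"
    unfolding marg_def by (rule MYT.integral_fst[OF integrable_joint])
  also have "\<dots> = 1"
    using nn_integral_joint joint_nonneg
    by (subst integral_eq_nn_integral) (auto intro!: AE_I2 simp: space_pair_measure)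
  finally show ?thesis .
qed

lemma positive_density_pair_post:
  assumes y: "y \<in> space MY" and marg_pos: "0 < marg MT prior obs y"
  shows "positive_density_pair MT (\<lambda>th. post MT prior obs th y) (\<lambda>th. phi th y)"
proof
  show "integrable MT (\<lambda>th. post MT prior obs th y)" "(\<integral>th. post MT prior obs th y \<partial>MT) = 1"
    using integrable_joint_if_marg_pos[OF marg_pos] marg_pos by (simp_all add: post_def marg_def)
  show "0 \<le> post MT prior obs th y" if "th \<in> space MT" for th
    using joint_nonneg[OF y that] marg_pos by (simp add: post_def)
qed (use y family in \<open>auto simp: posterior_family_def\<close>)

lemma sbc_q_ratio_eq:
  assumes y: "y \<in> space MY" and marg_pos: "0 < marg MT prior obs y"
  shows "sbc_q MT prior obs phi ratio x y
    = (\<integral>th. post MT prior obs th y * randomized_pit_cdf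
        (positive_density_pair.ratio_law MT (\<lambda>th. post MT prior obs th y) (\<lambda>th. phi th y)) x (ratio th y) \<partial>MT)"
proof -
  interpret positive_density_pair MT "\<lambda>th. post MT prior obs th y" "\<lambda>th. phi th y"
    using positive_density_pair_post[OF assms] .
  show ?thesis
    unfolding sbc_q_def ratio_law_def using AE_\<phi>_nonneg
    by (subst sbc_r_eq_randomized_pit_cdf) auto
qed

lemma sbc_q_ratio_nonneg:
  assumes "y \<in> space MY" "0 < marg MT prior obs y"
  shows "0 \<le> sbc_q MT prior obs phi ratio x y"
proof -
  interpret positive_density_pair MT "\<lambda>th. post MT prior obs th y" "\<lambda>th. phi th y"
    using positive_density_pair_post[OF assms] .
  show ?thesis
    using integral_rank_nonneg by (simp add: sbc_q_ratio_eq[OF assms])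
qed

lemma sbc_q_ratio_le:
  assumes "y \<in> space MY" "0 < marg MT prior obs y" and "0 < x" "x < 1"
  shows "sbc_q MT prior obs phi ratio x y \<le> x"
proof -
  interpret positive_density_pair MT "\<lambda>th. post MT prior obs th y" "\<lambda>th. phi th y"
    using positive_density_pair_post[OF assms(1,2)] .
  show ?thesis
    using integral_rank_le[OF assms(3,4)] by (simp add: sbc_q_ratio_eq[OF assms(1,2)])
qed

lemma AE_post_eq_if_sbc_q_ratio_eq:
  assumes "y \<in> space MY" "0 < marg MT prior obs y" and "0 < x" "x < 1"
    and "sbc_q MT prior obs phi ratio x y = x"
  shows "AE th in MT. post MT prior obs th y = phi th y"
proof -
  interpret positive_density_pair MT "\<lambda>th. post MT prior obs th y" "\<lambda>th. phi th y"
    using positive_density_pair_post[OF assms(1,2)] .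
  show ?thesis
    using AE_eq_if_integral_rank_eq[OF assms(3,4)] assms(5) by (simp add: sbc_q_ratio_eq[OF assms(1,2)])
qed

lemma sbc_q_ratio_eq_if_AE_post_eq:
  assumes "y \<in> space MY" "0 < marg MT prior obs y" and "0 \<le> x" "x \<le> 1"
    and "AE th in MT. post MT prior obs th y = phi th y"
  shows "sbc_q MT prior obs phi ratio x y = x"
proof -
  interpret positive_density_pair MT "\<lambda>th. post MT prior obs th y" "\<lambda>th. phi th y"
    using positive_density_pair_post[OF assms(1,2)] .
  show ?thesis
    using integral_rank_eq_if_AE_eq[OF assms(5,3,4)] by (simp add: sbc_q_ratio_eq[OF assms(1,2)])
qed

lemma sbc_q_ratio_mult_marg_bounds:
  assumes y: "y \<in> space MY" and x: "0 < x" "x < 1"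
  shows "0 \<le> sbc_q MT prior obs phi ratio x y * marg MT prior obs y
    \<and> sbc_q MT prior obs phi ratio x y * marg MT prior obs y \<le> x * marg MT prior obs y"
proof (cases "0 < marg MT prior obs y")
  case True
  then show ?thesis
    using sbc_q_ratio_nonneg[OF y True] sbc_q_ratio_le[OF y True x] by simp
next
  case False
  then show ?thesis
    using marg_nonneg[OF y] by simp
qed

lemma integrable_sbc_q_ratio_mult_marg:
  assumes "0 < x" "x < 1"
  shows "integrable MY (\<lambda>y. sbc_q MT prior obs phi ratio x y * marg MT prior obs y)"
proof (rule Bochner_Integration.integrable_bound[OF integrable_marg])
  show "AE y in MY. norm (sbc_q MT prior obs phi ratio x y * marg MT prior obs y) \<le> norm (marg MT prior obs y)"
  proof (rule AE_I2)
    fix y assume y: "y \<in> space MY"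
    show "norm (sbc_q MT prior obs phi ratio x y * marg MT prior obs y) \<le> norm (marg MT prior obs y)"
      using sbc_q_ratio_mult_marg_bounds[OF y assms] marg_nonneg[OF y] assms
        mult_right_mono[of x 1 "marg MT prior obs y"] by simp
  qed
qed simp

lemma AE_post_eq_if_passes_continuous_SBC:
  assumes "passes_continuous_SBC MT MY prior obs phi ratio"
  shows "AE y in MY. 0 < marg MT prior obs y \<longrightarrow> (AE th in MT. post MT prior obs th y = phi th y)"
proof -
  have "(\<integral>y. sbc_q MT prior obs phi ratio (1/2) y * marg MT prior obs y \<partial>MY) = (\<integral>y. 1/2 * marg MT prior obs y \<partial>MY)"
    using assms by (simp add: passes_continuous_SBC_def integral_marg)
  then have "AE y in MY. sbc_q MT prior obs phi ratio (1/2) y * marg MT prior obs y = 1/2 * marg MT prior obs y"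
    using integrable_sbc_q_ratio_mult_marg[of "1/2"] integrable_marg sbc_q_ratio_mult_marg_bounds[of _ "1/2", THEN conjunct2]
    by (intro MY.integral_eq_mono_AE_eq_AE) (auto intro!: AE_I2)
  then show ?thesis
  proof (rule AE_mp[OF _ AE_I2], intro impI)
    fix y assume y: "y \<in> space MY" and pos: "0 < marg MT prior obs y"
      and "sbc_q MT prior obs phi ratio (1/2) y * marg MT prior obs y = 1/2 * marg MT prior obs y"
    then have "sbc_q MT prior obs phi ratio (1/2) y = 1/2"
      by simp
    then show "AE th in MT. post MT prior obs th y = phi th y"
      using AE_post_eq_if_sbc_q_ratio_eq[OF y pos, of "1/2"] by simp
  qed
qed

lemma passes_continuous_SBC_if_AE_post_eq:
  assumes "AE y in MY. 0 < marg MT prior obs y \<longrightarrow> (AE th in MT. post MT prior obs th y = phi th y)"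
  shows "passes_continuous_SBC MT MY prior obs phi ratio"
  unfolding passes_continuous_SBC_def
proof
  fix x :: real assume "x \<in> {0..1}"
  then have "AE y in MY. sbc_q MT prior obs phi ratio x y * marg MT prior obs y = x * marg MT prior obs y"
    using assms by (rule_tac AE_mp) (auto intro!: AE_I2 sbc_q_ratio_eq_if_AE_post_eq dest: marg_nonneg)
  then have "(\<integral>y. sbc_q MT prior obs phi ratio x y * marg MT prior obs y \<partial>MY) = (\<integral>y. x * marg MT prior obs y \<partial>MY)"
    by (intro integral_cong_AE) auto
  then show "(\<integral>y. sbc_q MT prior obs phi ratio x y * marg MT prior obs y \<partial>MY) = x"
    by (simp add: integral_marg)
qed

lemma nn_integral_mismatch_eq_0_iff:
  assumes y: "y \<in> space MY" and integrable: "integrable MT (joint prior obs y)"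
  shows "(\<integral>\<^sup>+th. ennreal (joint prior obs y th * indicator {th. post MT prior obs th y \<noteq> phi th y} th) \<partial>MT) = 0
    \<longleftrightarrow> (0 < marg MT prior obs y \<longrightarrow> (AE th in MT. post MT prior obs th y = phi th y))"
proof -
  have mismatch_eq_0: "ennreal (joint prior obs y th * indicator {th. post MT prior obs th y \<noteq> phi th y} th) = 0
      \<longleftrightarrow> post MT prior obs th y = phi th y \<or> joint prior obs y th = 0" if "th \<in> space MT" for th
    using joint_nonneg[OF y that] by (auto simp: indicator_def ennreal_eq_0_iff)
  have "(\<integral>\<^sup>+th. ennreal (joint prior obs y th * indicator {th. post MT prior obs th y \<noteq> phi th y} th) \<partial>MT) = 0
      \<longleftrightarrow> (AE th in MT. ennreal (joint prior obs y th * indicator {th. post MT prior obs th y \<noteq> phi th y} th) = 0)"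
    using y by (intro nn_integral_0_iff_AE) measurable
  also have "\<dots> \<longleftrightarrow> (AE th in MT. post MT prior obs th y = phi th y \<or> joint prior obs y th = 0)"
    by (intro AE_cong mismatch_eq_0)
  also have "\<dots> \<longleftrightarrow> (0 < marg MT prior obs y \<longrightarrow> (AE th in MT. post MT prior obs th y = phi th y))"
  proof (cases "0 < marg MT prior obs y")
    case True
    interpret positive_density_pair MT "\<lambda>th. post MT prior obs th y" "\<lambda>th. phi th y"
      using positive_density_pair_post[OF y True] .
    have "(AE th in MT. post MT prior obs th y = phi th y \<or> joint prior obs y th = 0)
        \<longleftrightarrow> (AE th in MT. post MT prior obs th y = phi th y \<or> post MT prior obs th y = 0)"
      using True by (intro AE_cong) (simp add: post_def)
    then show ?thesis
      using True AE_eq_or_zero_iff_AE_eq by simp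
  next
    case False
    then have "AE th in MT. joint prior obs y th = 0"
      using AE_joint_eq_0_if_marg_eq_0[OF y integrable] marg_nonneg[OF y] by simp
    then have "AE th in MT. post MT prior obs th y = phi th y \<or> joint prior obs y th = 0"
      by eventually_elim simp
    then show ?thesis
      using False by simp
  qed
  finally show ?thesis .
qed

theorem nn_integral_nn_integral_mismatch_eq_0_iff:
  "(\<integral>\<^sup>+y. (\<integral>\<^sup>+th. ennreal (joint prior obs y th *
      indicator {th. post MT prior obs th y \<noteq> phi th y} th) \<partial>MT) \<partial>MY) = 0
    \<longleftrightarrow> (AE y in MY. 0 < marg MT prior obs y \<longrightarrow> (AE th in MT. post MT prior obs th y = phi th y))"
proof -
  have "(\<integral>\<^sup>+y. (\<integral>\<^sup>+th. ennreal (joint prior obs y th *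
      indicator {th. post MT prior obs th y \<noteq> phi th y} th) \<partial>MT) \<partial>MY) = 0
    \<longleftrightarrow> (AE y in MY. (\<integral>\<^sup>+th. ennreal (joint prior obs y th *
      indicator {th. post MT prior obs th y \<noteq> phi th y} th) \<partial>MT) = 0)"
    by (rule nn_integral_0_iff_AE) measurable
  also have "\<dots> \<longleftrightarrow> (AE y in MY. 0 < marg MT prior obs y \<longrightarrow> (AE th in MT. post MT prior obs th y = phi th y))"
    using AE_space AE_integrable_joint
    by (intro eventually_subst, eventually_elim) (rule nn_integral_mismatch_eq_0_iff)
  finally show ?thesis .
qed

end

theorem theorem6:
  fixes MT :: "'t measure" and MY :: "'y measure"
    and prior :: "'t \<Rightarrow> real" and obs :: "'y \<Rightarrow> 't \<Rightarrow> real"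
    and phi :: "'t \<Rightarrow> 'y \<Rightarrow> real"
  assumes "is_model MT MY prior obs"
    and "posterior_family MT MY phi"
  shows "passes_continuous_SBC MT MY prior obs phi
           (\<lambda>th y. post MT prior obs th y / phi th y)
         \<longleftrightarrow> (\<integral>\<^sup>+y. (\<integral>\<^sup>+th. ennreal (joint prior obs y th *
                 indicator {th. post MT prior obs th y \<noteq> phi th y} th) \<partial>MT) \<partial>MY) = 0"
proof -
  interpret sbc_model MT MY prior obs phi
    using assms by unfold_locales
  show ?thesis
    using AE_post_eq_if_passes_continuous_SBC passes_continuous_SBC_if_AE_post_eq
      nn_integral_nn_integral_mismatch_eq_0_iff by blast
qed

end
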